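(* Consider the following stochastic evolution model. A finite domain $M_d$ (a ball of diameter $d$) of a convex, normal, balanced planar mosaic is described by $J+1$ nonnegative combinatorial counting variables $X_0,X_1,\dots,X_J$ (with $X_0=N^{\star}$, the total corner degree), each of which grows as $X_j\asymp d^2$ as $d\to\infty$; write $x_j=X_j/X_0$ for $j=1,\dots,J$ and $\underline{x}=(x_1,\dots,x_J)$. The evolution is driven by micro-events of $I+1$ types $R_0,\dots,R_I$. Events of type $R_i$ are triggered by clocks, the number of which is $C_i=\sum_{j=0}^J C_{i,j}X_j$ (with given deterministic coefficients $C_{i,j}$); each individual clock of type $R_i$ gives signals at the times of independent exponential random variables with parameter $\lambda_i>0$. When a micro-event of type $R_i$ occurs, each $X_j$ changes by a deterministic increment $\Delta X_j(i)$. Define $\gamma_i(\underline{x})=C_i\lambda_i/X_0$, $\gamma(\underline{x})=\sum_{i=0}^I\gamma_i(\underline{x})$, $p_i(\underline{x})=\gamma_i(\underline{x})/\gamma(\underline{x})$, $\nu_j(\underline{x})=\sum_{i=0}^I\Delta X_j(i)\,p_i(\underline{x})$ for $j=0,\dots,J$, and $\hat x_j(\underline{x})=\nu_j(\underline{x})/\nu_0(\underline{x})$. Assume that at time $t$ the (deterministic) state of the mosaic is given by $\underline{x}=(x_1(t),\dots,x_J(t))$, and let $\underline{\mathbf{x}}(t+\Delta t)=(\mathbf{x}_1(t+\Delta t),\dots,\mathbf{x}_J(t+\Delta t))$ denote the random state at time $t+\Delta t$. Consider a simultaneous limit parametrized by $\rho\to\infty$ in which $d(\rho)\to\infty$, $\Delta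 t(\rho)\to 0$ and $d(\rho)\,\Delta t(\rho)$ is constant in $\rho$. Then in this limit, for each $j=1,\dots,J$, the random variables $$\frac{\mathbf{x}_j(t+\Delta t)-x_j(t)}{\Delta t}$$ converge in probability to $$\gamma(\underline{x})\cdot\nu_0(\underline{x})\cdot\bigl(\hat x_j(\underline{x})-x_j\bigr),$$ i.e. to the right-hand side of the ODE $\frac{dx_j}{dt}=\gamma(\underline{x})\,\nu_0(\underline{x})\,(\hat x_j(\underline{x})-x_j)$.
   Context: A mosaic is a tessellation of the plane by convex polygonal cells; "balanced" (in the sense of Grünbaum–Shephard) means in particular that counts of cells, nodes and corner degrees in a ball of diameter $d$ are all of order $d^2$. Notation $f\asymp g$ means $C^{-1}g\le f\le Cg$ for a constant $C>0$ independent of $d$. The corner degree $N^{\star}$ is the sum over cells of the number of their regular vertices (points where two edges of the cell meet at an angle different from $\pi$), averaged with the analogous sum over nodes. The cumulative process of all micro-events is a Poisson process whose expected interarrival time $E(\Delta\mathbf{T})$ satisfies $1/E(\Delta\mathbf{T})=\sum_i C_i\lambda_i=X_0\gamma(\underline{x})$. The increments of $X_j$ over $[t,t+\Delta t]$ are the sums of the deterministic increments of all micro-events occurring in that interval. *)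

theory Defs
  imports "HOL-Probability.Probability"
begin

text \<open>Coefficients: Cc i j = C_{i,j}; lam i = lambda_i; dX i j = Delta X_j(i).  The state is
  x = (x_1,...,x_J); we use the convention x_0 = 1 (since x_j = X_j / X_0).\<close>

definition ext_state :: "(nat \<Rightarrow> real) \<Rightarrow> nat \<Rightarrow> real" where
  "ext_state x j = (if j = 0 then 1 else x j)"

definition clocks :: "(nat \<Rightarrow> nat \<Rightarrow> real) \<Rightarrow> nat \<Rightarrow> (nat \<Rightarrow> real) \<Rightarrow> nat \<Rightarrow> real" where
  "clocks Cc J X i = (\<Sum>j\<le>J. Cc i j * X j)"

text \<open>gamma_i(x) = C_i lambda_i / X_0, evaluated at the normalised counts (1, x_1, ..., x_J).\<close>
definition gamma_i :: "(nat \<Rightarrow> nat \<Rightarrow> real) \<Rightarrow> (nat \<Rightarrow> real) \<Rightarrow> nat \<Rightarrow> (nat \<Rightarrow> real) \<Rightarrow> nat \<Rightarrow> real" where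
  "gamma_i Cc lam J x i = clocks Cc J (ext_state x) i * lam i / ext_state x 0"

definition gamma :: "(nat \<Rightarrow> nat \<Rightarrow> real) \<Rightarrow> (nat \<Rightarrow> real) \<Rightarrow> nat \<Rightarrow> nat \<Rightarrow> (nat \<Rightarrow> real) \<Rightarrow> real" where
  "gamma Cc lam I J x = (\<Sum>i\<le>I. gamma_i Cc lam J x i)"

definition p_i :: "(nat \<Rightarrow> nat \<Rightarrow> real) \<Rightarrow> (nat \<Rightarrow> real) \<Rightarrow> nat \<Rightarrow> nat \<Rightarrow> (nat \<Rightarrow> real) \<Rightarrow> nat \<Rightarrow> real" where
  "p_i Cc lam I J x i = gamma_i Cc lam J x i / gamma Cc lam I J x"

definition nu :: "(nat \<Rightarrow> nat \<Rightarrow> real) \<Rightarrow> (nat \<Rightarrow> real) \<Rightarrow> (nat \<Rightarrow> nat \<Rightarrow> int) \<Rightarrow> nat \<Rightarrow> nat \<Rightarrow> (nat \<Rightarrow> real) \<Rightarrow> nat \<Rightarrow> real" where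
  "nu Cc lam dX I J x j = (\<Sum>i\<le>I. real_of_int (dX i j) * p_i Cc lam I J x i)"

definition xhat :: "(nat \<Rightarrow> nat \<Rightarrow> real) \<Rightarrow> (nat \<Rightarrow> real) \<Rightarrow> (nat \<Rightarrow> nat \<Rightarrow> int) \<Rightarrow> nat \<Rightarrow> nat \<Rightarrow> (nat \<Rightarrow> real) \<Rightarrow> nat \<Rightarrow> real" where
  "xhat Cc lam dX I J x j = nu Cc lam dX I J x j / nu Cc lam dX I J x 0"

definition conv_in_prob :: "('p \<Rightarrow> 'a measure) \<Rightarrow> ('p \<Rightarrow> 'a \<Rightarrow> real) \<Rightarrow> real \<Rightarrow> 'p filter \<Rightarrow> bool" where
  "conv_in_prob M Y L F \<longleftrightarrow>
     (\<forall>e>0. ((\<lambda>r. measure (M r) {\<omega> \<in> space (M r). \<bar>Y r \<omega> - L\<bar> > e}) \<longlongrightarrow> 0) F)"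

end

theory Submission
  imports Defs
begin

(* Given the state, the number N_i of events of type i during the time step is Poisson with
   mean E g_i, where E = X_0 dt and g_i = gamma_i(x).  Since X_0 >= d^2 / K and d dt = c is
   constant, E >= c d / K tends to infinity, so Chebyshev's inequality (a Poisson variable has
   variance equal to its mean) gives N_i / E -> g_i in probability.  With u_i = N_i / E the
   difference quotient is exactly
     (sum_i u_i (dX_j(i) - x_j dX_0(i))) / (1 + dt sum_i u_i dX_0(i)),
   which is uniformly close to sum_i g_i (dX_j(i) - x_j dX_0(i)) = gamma nu_0 (xhat_j - x_j)
   as soon as every u_i is close to g_i and dt is small; a union bound over the finitely many
   event types concludes. *)

lemma exp_series_sums: "(\<lambda>k. r ^ k / fact k) sums exp (r::real)"
  using exp_converges[of r] by (simp add: divide_inverse mult.commute)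

lemma Suc_times_exp_series_term:
  "real (Suc n) * (r ^ Suc n / fact (Suc n)) = r * (r ^ n / fact n :: real)"
  by (simp add: field_simps del: of_nat_Suc)

lemma exp_series_times_index_sums: "(\<lambda>k. real k * (r ^ k / fact k)) sums (r * exp (r::real))"
proof -
  have "(\<lambda>n. real (Suc n) * (r ^ Suc n / fact (Suc n))) = (\<lambda>n. r * (r ^ n / fact n))"
    by (simp add: fun_eq_iff Suc_times_exp_series_term)
  then have "(\<lambda>n. real (Suc n) * (r ^ Suc n / fact (Suc n))) sums (r * exp r)"
    using sums_mult[OF exp_series_sums] by simp
  then show ?thesis
    by (subst (asm) sums_Suc_iff) simp
qed

lemma exp_series_times_index_squared_sums:
  "(\<lambda>k. (real k)\<^sup>2 * (r ^ k / fact k)) sums (r * (r + 1) * exp (r::real))"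
proof -
  have "(\<lambda>n. (real (Suc n))\<^sup>2 * (r ^ Suc n / fact (Suc n)))
      = (\<lambda>n. r * (real n * (r ^ n / fact n) + r ^ n / fact n))"
    by (simp only: power2_eq_square mult.assoc Suc_times_exp_series_term)
      (simp add: algebra_simps add_divide_distrib)
  moreover have "(\<lambda>n. r * (real n * (r ^ n / fact n) + r ^ n / fact n)) sums (r * (r + 1) * exp r)"
    using sums_mult[OF sums_add[OF exp_series_times_index_sums exp_series_sums], of r]
    by (simp add: algebra_simps)
  ultimately have "(\<lambda>n. (real (Suc n))\<^sup>2 * (r ^ Suc n / fact (Suc n))) sums (r * (r + 1) * exp r)"
    by simp
  then show ?thesis
    by (subst (asm) sums_Suc_iff) simp
qed

lemma poisson_variance_sums: "(\<lambda>k. r ^ k / fact k * exp (- r) * (real k - r)\<^sup>2) sums (r::real)"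
proof -
  have "(\<lambda>k. exp (- r) * ((real k)\<^sup>2 * (r ^ k / fact k) - 2 * r * (real k * (r ^ k / fact k))
            + r\<^sup>2 * (r ^ k / fact k)))
      sums (exp (- r) * (r * (r + 1) * exp r - 2 * r * (r * exp r) + r\<^sup>2 * exp r))"
    by (intro sums_mult sums_add sums_diff exp_series_sums exp_series_times_index_sums
        exp_series_times_index_squared_sums)
  moreover have "exp (- r) * (r * (r + 1) * exp r - 2 * r * (r * exp r) + r\<^sup>2 * exp r) = r"
    by (simp add: algebra_simps power2_eq_square exp_minus_inverse)
  ultimately show ?thesis
    by (simp add: power2_diff algebra_simps)
qed

lemma poisson_Chebyshev_inequality:
  fixes N :: "'a \<Rightarrow> nat"
  assumes "prob_space M" and N: "N \<in> measurable M (count_space UNIV)" and "0 \<le> r" "0 < a"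
    and pmf: "\<And>k. measure M {\<omega>\<in>space M. N \<omega> = k} = r ^ k / fact k * exp (- r)"
  shows "measure M {\<omega>\<in>space M. a < \<bar>real (N \<omega>) - r\<bar>} \<le> r / a\<^sup>2"
proof -
  interpret prob_space M by fact
  define p where "p k = r ^ k / fact k * exp (- r)" for k
  define A where "A = {k. a < \<bar>real k - r\<bar>}"
  define D where "D = distr M (count_space UNIV) N"
  have D_singleton: "emeasure D {k} = ennreal (p k)" for k
  proof -
    have "emeasure D {k} = emeasure M {\<omega>\<in>space M. N \<omega> = k}"
      unfolding D_def by (subst emeasure_distr[OF N]) (auto intro: arg_cong[where f = "emeasure M"])
    then show ?thesis
      using pmf by (simp add: emeasure_eq_measure p_def)
  qed
  have chebyshev_term: "ennreal (p k) * indicator A k \<le> ennreal (p k * (real k - r)\<^sup>2 / a\<^sup>2)" for k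
  proof (cases "k \<in> A")
    case True
    then have "a\<^sup>2 \<le> (real k - r)\<^sup>2"
      using \<open>0 < a\<close> power_mono[of a "\<bar>real k - r\<bar>" 2] by (simp add: A_def)
    then have "p k \<le> p k * (real k - r)\<^sup>2 / a\<^sup>2"
      using \<open>0 < a\<close> \<open>0 \<le> r\<close> by (simp add: p_def field_simps mult_left_mono)
    then show ?thesis
      using True by (simp add: ennreal_leI)
  qed simp
  have "emeasure M {\<omega>\<in>space M. a < \<bar>real (N \<omega>) - r\<bar>} = emeasure D A"
    unfolding D_def A_def by (subst emeasure_distr[OF N]) (auto intro: arg_cong[where f = "emeasure M"])
  also have "\<dots> = (\<integral>\<^sup>+k. ennreal (p k) * indicator A k \<partial>count_space UNIV)"
    by (subst emeasure_countable_singleton)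
      (auto simp: D_singleton nn_integral_count_space_indicator, simp_all add: D_def)
  also have "\<dots> \<le> (\<integral>\<^sup>+k. ennreal (p k * (real k - r)\<^sup>2 / a\<^sup>2) \<partial>count_space UNIV)"
    by (intro nn_integral_mono chebyshev_term)
  also have "\<dots> = ennreal (r / a\<^sup>2)"
    using sums_divide[OF poisson_variance_sums[of r], of "a\<^sup>2"] \<open>0 \<le> r\<close>
    by (simp add: nn_integral_count_space_nat p_def suminf_ennreal2 sums_summable sums_unique[symmetric])
  finally show ?thesis
    using \<open>0 \<le> r\<close> by (simp add: emeasure_eq_measure)
qed

lemma conv_in_prob_poisson_rescaled:
  fixes N :: "'p \<Rightarrow> 'a \<Rightarrow> nat" and E :: "'p \<Rightarrow> real"
  assumes prob: "\<And>\<rho>. prob_space (M \<rho>)"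
    and N: "\<And>\<rho>. N \<rho> \<in> measurable (M \<rho>) (count_space UNIV)"
    and E_pos: "\<And>\<rho>. 0 < E \<rho>" and E_lim: "filterlim E at_top F" and "0 \<le> r"
    and pmf: "\<And>\<rho> k. measure (M \<rho>) {\<omega>\<in>space (M \<rho>). N \<rho> \<omega> = k}
                    = (E \<rho> * r) ^ k / fact k * exp (- (E \<rho> * r))"
  shows "conv_in_prob M (\<lambda>\<rho> \<omega>. real (N \<rho> \<omega>) / E \<rho>) r F"
  unfolding conv_in_prob_def
proof (intro allI impI)
  fix e :: real
  assume "0 < e"
  have "measure (M \<rho>) {\<omega>\<in>space (M \<rho>). e < \<bar>real (N \<rho> \<omega>) / E \<rho> - r\<bar>}
      \<le> r / e\<^sup>2 * inverse (E \<rho>)" for \<rho>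
  proof -
    have "real n / E \<rho> - r = (real n - E \<rho> * r) / E \<rho>" for n
      using E_pos[of \<rho>] by (simp add: field_simps)
    then have "{\<omega>\<in>space (M \<rho>). e < \<bar>real (N \<rho> \<omega>) / E \<rho> - r\<bar>}
        = {\<omega>\<in>space (M \<rho>). e * E \<rho> < \<bar>real (N \<rho> \<omega>) - E \<rho> * r\<bar>}"
      using E_pos[of \<rho>] by (simp add: pos_less_divide_eq)
    also have "measure (M \<rho>) \<dots> \<le> E \<rho> * r / (e * E \<rho>)\<^sup>2"
      by (rule poisson_Chebyshev_inequality[OF prob N _ _ pmf])
        (use E_pos[of \<rho>] \<open>0 < e\<close> \<open>0 \<le> r\<close> in auto)
    also have "\<dots> = r / e\<^sup>2 * inverse (E \<rho>)"
      using E_pos[of \<rho>] by (simp add: power2_eq_square field_simps)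
    finally show ?thesis .
  qed
  then have upper: "\<forall>\<^sub>F \<rho> in F. measure (M \<rho>) {\<omega>\<in>space (M \<rho>). e < \<bar>real (N \<rho> \<omega>) / E \<rho> - r\<bar>}
      \<le> r / e\<^sup>2 * inverse (E \<rho>)"
    by (intro always_eventually allI)
  have lim: "((\<lambda>\<rho>. r / e\<^sup>2 * inverse (E \<rho>)) \<longlongrightarrow> 0) F"
    using tendsto_mult_right_zero[OF tendsto_inverse_0_at_top[OF E_lim]] .
  show "((\<lambda>\<rho>. measure (M \<rho>) {\<omega>\<in>space (M \<rho>). e < \<bar>real (N \<rho> \<omega>) / E \<rho> - r\<bar>}) \<longlongrightarrow> 0) F"
    by (rule tendsto_sandwich[OF _ upper tendsto_const lim]) simp
qed

lemma conv_in_prob_of_components: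
  fixes U :: "'p \<Rightarrow> nat \<Rightarrow> 'a \<Rightarrow> real"
  assumes prob: "\<And>\<rho>. prob_space (M \<rho>)"
    and U: "\<And>\<rho> i. i \<le> I \<Longrightarrow> U \<rho> i \<in> borel_measurable (M \<rho>)"
    and U_conv: "\<And>i. i \<le> I \<Longrightarrow> conv_in_prob M (\<lambda>\<rho>. U \<rho> i) (u i) F"
    and control: "\<And>e. 0 < e \<Longrightarrow> \<exists>\<eta>>0. \<forall>\<^sub>F \<rho> in F. \<forall>\<omega>\<in>space (M \<rho>).
                    (\<forall>i\<le>I. \<bar>U \<rho> i \<omega> - u i\<bar> \<le> \<eta>) \<longrightarrow> \<bar>Y \<rho> \<omega> - L\<bar> \<le> e"
  shows "conv_in_prob M Y L F"
  unfolding conv_in_prob_def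
proof (intro allI impI)
  fix e :: real
  assume "0 < e"
  then obtain \<eta> where "0 < \<eta>" and controlled: "\<forall>\<^sub>F \<rho> in F. \<forall>\<omega>\<in>space (M \<rho>).
      (\<forall>i\<le>I. \<bar>U \<rho> i \<omega> - u i\<bar> \<le> \<eta>) \<longrightarrow> \<bar>Y \<rho> \<omega> - L\<bar> \<le> e"
    using control by blast
  define B where "B \<rho> i = {\<omega>\<in>space (M \<rho>). \<eta> < \<bar>U \<rho> i \<omega> - u i\<bar>}" for \<rho> i
  have B_sets: "B \<rho> i \<in> sets (M \<rho>)" if "i \<le> I" for \<rho> i
    using U[OF that] unfolding B_def by measurable
  have upper: "\<forall>\<^sub>F \<rho> in F. measure (M \<rho>) {\<omega>\<in>space (M \<rho>). e < \<bar>Y \<rho> \<omega> - L\<bar>} \<le> (\<Sum>i\<le>I. measure (M \<rho>) (B \<rho> i))"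
    using controlled
  proof eventually_elim
    case (elim \<rho>)
    interpret prob_space "M \<rho>" by (rule prob)
    have "{\<omega>\<in>space (M \<rho>). e < \<bar>Y \<rho> \<omega> - L\<bar>} \<subseteq> (\<Union>i\<le>I. B \<rho> i)"
      using elim by (fastforce simp: B_def not_le)
    then have "measure (M \<rho>) {\<omega>\<in>space (M \<rho>). e < \<bar>Y \<rho> \<omega> - L\<bar>} \<le> measure (M \<rho>) (\<Union>i\<le>I. B \<rho> i)"
      using B_sets by (intro finite_measure_mono) auto
    also have "\<dots> \<le> (\<Sum>i\<le>I. measure (M \<rho>) (B \<rho> i))"
      using B_sets by (intro finite_measure_subadditive_finite) auto
    finally show ?case .
  qed
  have lim: "((\<lambda>\<rho>. \<Sum>i\<le>I. measure (M \<rho>) (B \<rho> i)) \<longlongrightarrow> 0) F"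
    using U_conv \<open>0 < \<eta>\<close> by (intro tendsto_null_sum) (auto simp: B_def conv_in_prob_def)
  show "((\<lambda>\<rho>. measure (M \<rho>) {\<omega>\<in>space (M \<rho>). e < \<bar>Y \<rho> \<omega> - L\<bar>}) \<longlongrightarrow> 0) F"
    by (rule tendsto_sandwich[OF _ upper tendsto_const lim]) simp
qed

lemma increment_quotient_eq:
  fixes u a b :: "nat \<Rightarrow> real"
  assumes "Z \<noteq> 0" "t \<noteq> 0" "1 + t * (\<Sum>i\<le>I. u i * b i) \<noteq> 0"
  shows "((xj * Z + (\<Sum>i\<le>I. Z * t * u i * a i)) / (Z + (\<Sum>i\<le>I. Z * t * u i * b i)) - xj) / t
       = (\<Sum>i\<le>I. u i * (a i - xj * b i)) / (1 + t * (\<Sum>i\<le>I. u i * b i))"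
proof -
  define D where "D = 1 + t * (\<Sum>i\<le>I. u i * b i)"
  define s where "s = (\<Sum>i\<le>I. u i * (a i - xj * b i))"
  have denominator: "Z + (\<Sum>i\<le>I. Z * t * u i * b i) = Z * D"
    by (simp add: D_def algebra_simps sum_distrib_left)
  have numerator: "xj * Z + (\<Sum>i\<le>I. Z * t * u i * a i) = xj * (Z * D) + Z * t * s"
    by (simp add: D_def s_def algebra_simps sum_distrib_left sum_subtractf)
  have "D \<noteq> 0"
    using assms by (simp add: D_def)
  then show ?thesis
    unfolding denominator numerator D_def[symmetric] s_def[symmetric]
    using assms by (simp add: field_simps)
qed

lemma quotient_deviation_le:
  fixes s D L :: real
  assumes "1 / 2 \<le> D"
  shows "\<bar>s / D - L\<bar> \<le> 2 * (\<bar>s - L\<bar> + \<bar>L\<bar> * \<bar>D - 1\<bar>)"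
proof -
  have "s / D - L = (s - L - L * (D - 1)) / D"
    using assms by (simp add: field_simps)
  also have "\<bar>\<dots>\<bar> \<le> \<bar>s - L - L * (D - 1)\<bar> / (1 / 2)"
    unfolding abs_divide using assms by (intro divide_left_mono) auto
  also have "\<dots> \<le> 2 * (\<bar>s - L\<bar> + \<bar>L\<bar> * \<bar>D - 1\<bar>)"
    using abs_triangle_ineq4[of "s - L" "L * (D - 1)"] by (simp add: abs_mult)
  finally show ?thesis .
qed

lemma sum_deviation_le:
  fixes u g c :: "nat \<Rightarrow> real"
  assumes "\<forall>i\<le>I. \<bar>u i - g i\<bar> \<le> \<eta>"
  shows "\<bar>(\<Sum>i\<le>I. u i * c i) - (\<Sum>i\<le>I. g i * c i)\<bar> \<le> \<eta> * (\<Sum>i\<le>I. \<bar>c i\<bar>)"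
proof -
  have "(\<Sum>i\<le>I. u i * c i) - (\<Sum>i\<le>I. g i * c i) = (\<Sum>i\<le>I. (u i - g i) * c i)"
    by (simp add: sum_subtractf left_diff_distrib)
  also have "\<bar>\<dots>\<bar> \<le> (\<Sum>i\<le>I. \<bar>u i - g i\<bar> * \<bar>c i\<bar>)"
    unfolding abs_mult[symmetric] by (rule sum_abs)
  also have "\<dots> \<le> (\<Sum>i\<le>I. \<eta> * \<bar>c i\<bar>)"
    using assms by (intro sum_mono mult_right_mono) auto
  finally show ?thesis
    by (simp add: sum_distrib_left)
qed

lemma eventually_at_right_0_mult_less:
  fixes A e :: real
  assumes "0 < e"
  shows "\<forall>\<^sub>F \<eta> in at_right 0. 0 < \<eta> \<and> \<eta> * A < e"
proof -
  have "((\<lambda>\<eta>. \<eta> * A) \<longlongrightarrow> 0) (at_right 0)"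
    by (intro tendsto_mult_left_zero tendsto_ident_at)
  then show ?thesis
    using assms by (intro eventually_conj eventually_at_right_less order_tendstoD(2)) auto
qed

lemma increment_quotient_deviation_le:
  fixes n a b g :: "nat \<Rightarrow> real" and I :: nat and xj Z t \<eta> :: real
  defines "L \<equiv> \<Sum>i\<le>I. g i * (a i - xj * b i)"
    and "B \<equiv> \<bar>\<Sum>i\<le>I. g i * b i\<bar> + (\<Sum>i\<le>I. \<bar>b i\<bar>)"
  assumes "Z \<noteq> 0" "0 < t" "t * B \<le> 1 / 2" "\<eta> \<le> 1"
    and close: "\<forall>i\<le>I. \<bar>n i / (Z * t) - g i\<bar> \<le> \<eta>"
  shows "\<bar>((xj * Z + (\<Sum>i\<le>I. n i * a i)) / (Z + (\<Sum>i\<le>I. n i * b i)) - xj) / t - L\<bar>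
      \<le> 2 * (\<eta> * (\<Sum>i\<le>I. \<bar>a i - xj * b i\<bar>) + \<bar>L\<bar> * (t * B))"
proof -
  define u where "u i = n i / (Z * t)" for i
  define s where "s = (\<Sum>i\<le>I. u i * (a i - xj * b i))"
  define s' where "s' = (\<Sum>i\<le>I. u i * b i)"
  have n_eq: "n = (\<lambda>i. Z * t * u i)"
    using \<open>Z \<noteq> 0\<close> \<open>0 < t\<close> by (simp add: u_def fun_eq_iff)
  have u_close: "\<forall>i\<le>I. \<bar>u i - g i\<bar> \<le> \<eta>"
    using close by (simp add: u_def)
  then have "0 \<le> \<eta>"
    using abs_ge_zero order_trans by blast
  have "\<bar>s'\<bar> \<le> \<bar>\<Sum>i\<le>I. g i * b i\<bar> + \<eta> * (\<Sum>i\<le>I. \<bar>b i\<bar>)"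
    using sum_deviation_le[OF u_close, of b] abs_triangle_ineq2[of s' "\<Sum>i\<le>I. g i * b i"]
    unfolding s'_def by linarith
  also have "\<dots> \<le> B"
    using \<open>0 \<le> \<eta>\<close> \<open>\<eta> \<le> 1\<close> unfolding B_def by (simp add: mult_left_le_one_le sum_nonneg)
  finally have "\<bar>t * s'\<bar> \<le> t * B"
    using \<open>0 < t\<close> by (simp add: abs_mult)
  then have "1 / 2 \<le> 1 + t * s'"
    using \<open>t * B \<le> 1 / 2\<close> by linarith
  then have "\<bar>s / (1 + t * s') - L\<bar> \<le> 2 * (\<bar>s - L\<bar> + \<bar>L\<bar> * \<bar>t * s'\<bar>)"
    using quotient_deviation_le[of "1 + t * s'" s L] by simp
  also have "\<dots> \<le> 2 * (\<eta> * (\<Sum>i\<le>I. \<bar>a i - xj * b i\<bar>) + \<bar>L\<bar> * (t * B))"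
    using sum_deviation_le[OF u_close, of "\<lambda>i. a i - xj * b i"]
      mult_left_mono[OF \<open>\<bar>t * s'\<bar> \<le> t * B\<close>, of "\<bar>L\<bar>"]
    unfolding s_def L_def by simp
  finally show ?thesis
    unfolding n_eq
    using increment_quotient_eq[where u = u] \<open>Z \<noteq> 0\<close> \<open>0 < t\<close> \<open>1 / 2 \<le> 1 + t * s'\<close>
    by (simp add: s_def s'_def)
qed

lemma increment_quotient_control:
  fixes a b g :: "nat \<Rightarrow> real" and Z t :: "'p \<Rightarrow> real" and n :: "'p \<Rightarrow> nat \<Rightarrow> 'a \<Rightarrow> real"
  assumes t_lim: "(t \<longlongrightarrow> 0) F" and "\<And>\<rho>. 0 < t \<rho>" "\<And>\<rho>. Z \<rho> \<noteq> 0" "0 < e"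
  shows "\<exists>\<eta>>0. \<forall>\<^sub>F \<rho> in F. \<forall>\<omega>\<in>S \<rho>. (\<forall>i\<le>I. \<bar>n \<rho> i \<omega> / (Z \<rho> * t \<rho>) - g i\<bar> \<le> \<eta>) \<longrightarrow>
           \<bar>((xj * Z \<rho> + (\<Sum>i\<le>I. n \<rho> i \<omega> * a i)) / (Z \<rho> + (\<Sum>i\<le>I. n \<rho> i \<omega> * b i)) - xj) / t \<rho>
            - (\<Sum>i\<le>I. g i * (a i - xj * b i))\<bar> \<le> e"
proof -
  define L where "L = (\<Sum>i\<le>I. g i * (a i - xj * b i))"
  define A where "A = (\<Sum>i\<le>I. \<bar>a i - xj * b i\<bar>)"
  define B where "B = \<bar>\<Sum>i\<le>I. g i * b i\<bar> + (\<Sum>i\<le>I. \<bar>b i\<bar>)"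
  have "\<forall>\<^sub>F \<eta> in at_right 0. (0 < \<eta> \<and> \<eta> * 1 < 1) \<and> (0 < \<eta> \<and> \<eta> * A < e / 4)"
    using \<open>0 < e\<close> by (intro eventually_conj eventually_at_right_0_mult_less) auto
  then obtain \<eta> where "0 < \<eta>" "\<eta> < 1" "\<eta> * A < e / 4"
    using eventually_happens'[OF trivial_limit_at_right_real] by auto
  have "\<forall>\<^sub>F \<delta> in at_right 0. (0 < \<delta> \<and> \<delta> * B < 1 / 2) \<and> (0 < \<delta> \<and> \<delta> * (\<bar>L\<bar> * B) < e / 4)"
    using \<open>0 < e\<close> by (intro eventually_conj eventually_at_right_0_mult_less) auto
  then obtain \<delta> where "0 < \<delta>" "\<delta> * B < 1 / 2" "\<delta> * (\<bar>L\<bar> * B) < e / 4"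
    using eventually_happens'[OF trivial_limit_at_right_real] by auto
  let ?Q = "\<lambda>Z t (m :: nat \<Rightarrow> real).
    ((xj * Z + (\<Sum>i\<le>I. m i * a i)) / (Z + (\<Sum>i\<le>I. m i * b i)) - xj) / t"
  have pointwise: "\<bar>?Q Z' t' m - L\<bar> \<le> e"
    if "Z' \<noteq> 0" "0 < t'" "t' < \<delta>" "\<forall>i\<le>I. \<bar>m i / (Z' * t') - g i\<bar> \<le> \<eta>" for Z' t' m
  proof -
    have "0 \<le> B"
      by (simp add: B_def sum_nonneg)
    then have "t' * B \<le> \<delta> * B"
      using \<open>t' < \<delta>\<close> by (simp add: mult_right_mono)
    then have "\<bar>?Q Z' t' m - L\<bar> \<le> 2 * (\<eta> * A + \<bar>L\<bar> * (t' * B))"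
      using that \<open>\<eta> < 1\<close> \<open>\<delta> * B < 1 / 2\<close> unfolding L_def A_def B_def
      by (intro increment_quotient_deviation_le) auto
    also have "\<dots> \<le> e"
      using \<open>\<eta> * A < e / 4\<close> \<open>\<delta> * (\<bar>L\<bar> * B) < e / 4\<close>
        mult_left_mono[OF \<open>t' * B \<le> \<delta> * B\<close>, of "\<bar>L\<bar>"]
      by (simp add: algebra_simps)
    finally show ?thesis .
  qed
  have "\<forall>\<^sub>F \<rho> in F. t \<rho> < \<delta>"
    using order_tendstoD(2)[OF t_lim \<open>0 < \<delta>\<close>] .
  then show ?thesis
    using assms(2,3) \<open>0 < \<eta>\<close> unfolding L_def[symmetric]
    by (intro exI[of _ \<eta>]) (auto elim!: eventually_mono intro!: pointwise)
qed

lemma clocks_times_rate_eq_gamma_i: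
  assumes "\<And>j. 1 \<le> j \<Longrightarrow> j \<le> J \<Longrightarrow> X j = x j * X 0"
  shows "clocks Cc J X i * lam i = X 0 * gamma_i Cc lam J x i"
proof -
  have "clocks Cc J X i = X 0 * clocks Cc J (ext_state x) i"
    unfolding clocks_def sum_distrib_left
    using assms by (intro sum.cong) (auto simp: ext_state_def)
  then show ?thesis
    by (simp add: gamma_i_def ext_state_def)
qed

lemma gamma_times_nu:
  assumes "gamma Cc lam I J x \<noteq> 0"
  shows "gamma Cc lam I J x * nu Cc lam dX I J x k = (\<Sum>i\<le>I. real_of_int (dX i k) * gamma_i Cc lam J x i)"
  using assms by (simp add: nu_def p_i_def sum_distrib_left)

lemma gamma_nu_xhat_eq:
  assumes "nu Cc lam dX I J x 0 \<noteq> 0"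
  shows "gamma Cc lam I J x * nu Cc lam dX I J x 0 * (xhat Cc lam dX I J x j - x j)
       = (\<Sum>i\<le>I. gamma_i Cc lam J x i * (real_of_int (dX i j) - x j * real_of_int (dX i 0)))"
proof -
  have "gamma Cc lam I J x \<noteq> 0"
    using assms by (auto simp: nu_def p_i_def)
  then have "gamma Cc lam I J x * nu Cc lam dX I J x 0 * (xhat Cc lam dX I J x j - x j)
      = gamma Cc lam I J x * nu Cc lam dX I J x j - x j * (gamma Cc lam I J x * nu Cc lam dX I J x 0)"
    using assms by (simp add: xhat_def field_simps)
  also have "\<dots> = (\<Sum>i\<le>I. gamma_i Cc lam J x i * (real_of_int (dX i j) - x j * real_of_int (dX i 0)))"
    using \<open>gamma Cc lam I J x \<noteq> 0\<close>
    by (simp add: gamma_times_nu sum_distrib_left sum_subtractf algebra_simps)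
  finally show ?thesis .
qed

lemma filterlim_at_top_quadratic_times_step:
  fixes d dt Y :: "'p \<Rightarrow> real"
  assumes "filterlim d at_top F" "\<And>\<rho>. d \<rho> * dt \<rho> = c" "\<And>\<rho>. 0 < d \<rho>" "\<And>\<rho>. 0 < dt \<rho>"
    "0 < K" "\<And>\<rho>. d \<rho> ^ 2 / K \<le> Y \<rho>"
  shows "filterlim (\<lambda>\<rho>. Y \<rho> * dt \<rho>) at_top F"
proof (rule filterlim_at_top_mono)
  have "0 < c"
    using assms(2-4) by (metis mult_pos_pos)
  then show "filterlim (\<lambda>\<rho>. c / K * d \<rho>) at_top F"
    using assms(1,5) by (intro filterlim_tendsto_pos_mult_at_top[OF tendsto_const]) auto
  have "c / K * d \<rho> \<le> Y \<rho> * dt \<rho>" for \<rho>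
  proof -
    have "c / K * d \<rho> = d \<rho> ^ 2 / K * dt \<rho>"
      using assms(2)[of \<rho>] by (simp add: power2_eq_square field_simps)
    also have "\<dots> \<le> Y \<rho> * dt \<rho>"
      using assms(4,6)[of \<rho>] by (intro mult_right_mono) auto
    finally show ?thesis .
  qed
  then show "\<forall>\<^sub>F \<rho> in F. c / K * d \<rho> \<le> Y \<rho> * dt \<rho>"
    by simp
qed

theorem theorem1:
  fixes I J :: nat
    and Cc :: "nat \<Rightarrow> nat \<Rightarrow> real"
    and lam :: "nat \<Rightarrow> real"
    and dX :: "nat \<Rightarrow> nat \<Rightarrow> int"
    and x :: "nat \<Rightarrow> real"
    and d dt :: "real \<Rightarrow> real"
    and X :: "real \<Rightarrow> nat \<Rightarrow> nat"
    and M :: "real \<Rightarrow> 'a measure"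
    and N :: "real \<Rightarrow> nat \<Rightarrow> 'a \<Rightarrow> nat"
  assumes lam_pos: "\<And>i. i \<le> I \<Longrightarrow> lam i > 0"
    and d_pos: "\<And>\<rho>. d \<rho> > 0"
    and dt_pos: "\<And>\<rho>. dt \<rho> > 0"
    and d_lim: "filterlim d at_top at_top"
    and dt_lim: "(dt \<longlongrightarrow> 0) at_top"
    and d_dt_const: "\<exists>c. \<forall>\<rho>. d \<rho> * dt \<rho> = c"
    and X_order: "\<exists>K>0. \<forall>\<rho>. \<forall>j\<le>J. d \<rho> ^ 2 / K \<le> real (X \<rho> j) \<and> real (X \<rho> j) \<le> K * d \<rho> ^ 2"
    and state: "\<And>\<rho> j. 1 \<le> j \<Longrightarrow> j \<le> J \<Longrightarrow> real (X \<rho> j) = x j * real (X \<rho> 0)"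
    and clocks_nonneg: "\<And>\<rho> i. i \<le> I \<Longrightarrow> clocks Cc J (\<lambda>j. real (X \<rho> j)) i \<ge> 0"
    and nu0_nz: "nu Cc lam dX I J x 0 \<noteq> 0"
    and prob: "\<And>\<rho>. prob_space (M \<rho>)"
    and N_indep: "\<And>\<rho>. prob_space.indep_vars (M \<rho>) (\<lambda>_. count_space UNIV) (N \<rho>) {..I}"
    and N_poisson: "\<And>\<rho> i k. i \<le> I \<Longrightarrow>
        measure (M \<rho>) {\<omega> \<in> space (M \<rho>). N \<rho> i \<omega> = k} =
          (let r = clocks Cc J (\<lambda>j. real (X \<rho> j)) i * lam i * dt \<rho> in r ^ k / fact k * exp (- r))"
    and j_range: "1 \<le> j" "j \<le> J"
  shows "conv_in_prob M
           (\<lambda>\<rho> \<omega>. ((real (X \<rho> j) + (\<Sum>i\<le>I. real (N \<rho> i \<omega>) * real_of_int (dX i j)))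
                      / (real (X \<rho> 0) + (\<Sum>i\<le>I. real (N \<rho> i \<omega>) * real_of_int (dX i 0)))
                    - x j) / dt \<rho>)
           (gamma Cc lam I J x * nu Cc lam dX I J x 0 * (xhat Cc lam dX I J x j - x j))
           at_top"
proof -
  obtain K where "0 < K" and X0_lower: "\<And>\<rho>. d \<rho> ^ 2 / K \<le> real (X \<rho> 0)"
    using X_order by blast
  obtain c where c: "\<And>\<rho>. d \<rho> * dt \<rho> = c"
    using d_dt_const by blast
  define E where "E \<rho> = real (X \<rho> 0) * dt \<rho>" for \<rho>
  define g where "g = gamma_i Cc lam J x"
  have X0_pos: "0 < real (X \<rho> 0)" for \<rho>
    using less_le_trans[OF _ X0_lower, of 0] d_pos[of \<rho>] \<open>0 < K\<close> by simp
  have X0_nz: "real (X \<rho> 0) \<noteq> 0" for \<rho>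
    using X0_pos[of \<rho>] by simp
  have E_pos: "0 < E \<rho>" for \<rho>
    using X0_pos dt_pos by (simp add: E_def)
  have E_lim: "filterlim E at_top at_top"
    unfolding E_def using d_lim c d_pos dt_pos \<open>0 < K\<close> X0_lower
    by (rule filterlim_at_top_quadratic_times_step)
  have rate: "clocks Cc J (\<lambda>j. real (X \<rho> j)) i * lam i = real (X \<rho> 0) * g i" for \<rho> i
    unfolding g_def using state by (intro clocks_times_rate_eq_gamma_i) auto
  have g_nonneg: "0 \<le> g i" if "i \<le> I" for i
    using mult_nonneg_nonneg[OF clocks_nonneg[OF that, of 0] less_imp_le[OF lam_pos[OF that]]] X0_pos[of 0]
    by (simp add: rate zero_le_mult_iff)
  have N_meas: "N \<rho> i \<in> measurable (M \<rho>) (count_space UNIV)" if "i \<le> I" for \<rho> i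
    using N_indep[of \<rho>] that unfolding prob_space.indep_vars_def2[OF prob] by auto
  show ?thesis
    unfolding gamma_nu_xhat_eq[OF nu0_nz] g_def[symmetric] state[OF j_range]
  proof (rule conv_in_prob_of_components[where U = "\<lambda>\<rho> i \<omega>. real (N \<rho> i \<omega>) / E \<rho>"
        and u = g and I = I, OF prob], goal_cases measurable convergence control)
    case (measurable \<rho> i)
    then show ?case
      using N_meas by measurable
  next
    case (convergence i)
    have "measure (M \<rho>) {\<omega>\<in>space (M \<rho>). N \<rho> i \<omega> = k}
        = (E \<rho> * g i) ^ k / fact k * exp (- (E \<rho> * g i))" for \<rho> k
      using N_poisson[OF convergence, of \<rho> k] by (simp add: Let_def rate) (simp add: E_def ac_simps)
    then show ?case
      by (rule conv_in_prob_poisson_rescaled[OF prob N_meas[OF convergence] E_pos E_lim g_nonneg[OF convergence]])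
  next
    case (control e)
    show ?case
      unfolding E_def by (rule increment_quotient_control[OF dt_lim dt_pos X0_nz control])
  qed
qed

end
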